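(* Let $p$ be an odd prime, let $a$ be an integer with $a\not\equiv 0,\pm1\pmod p$, and let $n\ge 1$ with $T_n(a)\not\equiv\pm1\pmod p$. Define $\epsilon(b)=\left(\frac{b^2-1}{p}\right)$ and $\delta(b)=\left(\frac{2(b+1)}{p}\right)$ (Legendre symbols). Then $\epsilon(T_n(a))=\epsilon(a)$. Moreover $\delta(T_n(a))=1$ if $n$ is even and $\delta(T_n(a))=\delta(a)$ if $n$ is odd.
   Context: $T_n(x)$ denotes the Chebyshev polynomial of the first kind, the integer polynomial with $T_n(\cos\theta)=\cos n\theta$, equivalently $(x+\sqrt{x^2-1})^n=T_n(x)+U_{n-1}(x)\sqrt{x^2-1}$. *)

theory Defs
  imports "HOL-Number_Theory.Number_Theory"
begin

fun chebyshev_T :: "nat \<Rightarrow> 'a::comm_ring_1 \<Rightarrow> 'a" where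
  "chebyshev_T 0 x = 1"
| "chebyshev_T (Suc 0) x = x"
| "chebyshev_T (Suc (Suc n)) x = 2 * x * chebyshev_T (Suc n) x - chebyshev_T n x"

definition eps_sym :: "int \<Rightarrow> int \<Rightarrow> int" where
  "eps_sym p b = Legendre (b^2 - 1) p"

definition delta_sym :: "int \<Rightarrow> int \<Rightarrow> int" where
  "delta_sym p b = Legendre (2 * (b + 1)) p"

end

(* Writing (a + sqrt(a^2 - 1))^n = T_n(a) + U_(n-1)(a) sqrt(a^2 - 1), taking norms gives
   T_n(a)^2 - 1 = (a^2 - 1) U_(n-1)(a)^2, and the multiplication law gives
   2 (T_2m(a) + 1) = (2 T_m(a))^2 and 2 (T_(2m+1)(a) + 1) = 2 (a + 1) (T_m(a) + (a - 1) U_(m-1)(a))^2.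
   Since T_n(a) is not congruent to 1 or -1, the left-hand sides are prime to p, so the square
   factors are prime to p as well and drop out of the Legendre symbols. *)
theory Submission
  imports Defs
begin

text \<open>The pair (T_n x, U_(n-1) x), i.e. the coordinates of (x + sqrt(x^2 - 1))^n in the basis
  1, sqrt(x^2 - 1); the recursion is multiplication by x + sqrt(x^2 - 1).\<close>
fun chebyshev_TU :: "nat \<Rightarrow> 'a::comm_ring_1 \<Rightarrow> 'a \<times> 'a" where
  "chebyshev_TU 0 x = (1, 0)"
| "chebyshev_TU (Suc n) x =
     (x * fst (chebyshev_TU n x) + (x^2 - 1) * snd (chebyshev_TU n x),
      fst (chebyshev_TU n x) + x * snd (chebyshev_TU n x))"

lemma fst_chebyshev_TU: "fst (chebyshev_TU n x) = chebyshev_T n x"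
proof (induction n x rule: chebyshev_T.induct)
  case (3 n x)
  have "fst (chebyshev_TU (Suc (Suc n)) x)
      = 2 * x * fst (chebyshev_TU (Suc n) x) - fst (chebyshev_TU n x)"
    by (simp add: algebra_simps power2_eq_square)
  with 3 show ?case by simp
qed simp_all

lemma chebyshev_TU_norm: "fst (chebyshev_TU n x)^2 - (x^2 - 1) * snd (chebyshev_TU n x)^2 = 1"
  by (induction n) (simp_all add: algebra_simps power2_eq_square)

lemma chebyshev_TU_add:
  assumes "chebyshev_TU m x = (t, u)" and "chebyshev_TU n x = (t', u')"
  shows "chebyshev_TU (m + n) x = (t * t' + (x^2 - 1) * u * u', t * u' + u * t')"
  using assms(1)
proof (induction m arbitrary: t u)
  case 0
  then show ?case using assms(2) by simp
next
  case (Suc m)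
  obtain t0 u0 where tu0: "chebyshev_TU m x = (t0, u0)" by fastforce
  with Suc.prems have "t = x * t0 + (x^2 - 1) * u0" and "u = t0 + x * u0" by auto
  moreover have "chebyshev_TU (m + n) x = (t0 * t' + (x^2 - 1) * u0 * u', t0 * u' + u0 * t')"
    using Suc.IH[OF tu0] .
  ultimately show ?case
    by simp (simp add: algebra_simps)
qed

lemma chebyshev_T_sq_minus_one:
  "chebyshev_T n x ^ 2 - 1 = (x^2 - 1) * snd (chebyshev_TU n x) ^ 2"
  using chebyshev_TU_norm[of n x] by (simp add: fst_chebyshev_TU algebra_simps)

lemma chebyshev_T_double: "chebyshev_T (2 * m) x = 2 * chebyshev_T m x ^ 2 - 1"
proof -
  obtain t u where tu: "chebyshev_TU m x = (t, u)" by fastforce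
  have "chebyshev_T (2 * m) x = fst (chebyshev_TU (m + m) x)"
    by (simp only: fst_chebyshev_TU mult_2)
  also have "\<dots> = t * t + (x^2 - 1) * u * u"
    using chebyshev_TU_add[OF tu tu] by simp
  also have "\<dots> = 2 * t^2 - 1"
    using chebyshev_TU_norm[of m x] tu by (simp add: algebra_simps power2_eq_square)
  finally show ?thesis
    using tu fst_chebyshev_TU[of m x] by simp
qed

lemma chebyshev_T_odd_plus_one:
  assumes "chebyshev_TU m x = (t, u)"
  shows "chebyshev_T (2 * m + 1) x + 1 = (x + 1) * (t + (x - 1) * u)^2"
proof -
  have "chebyshev_T (2 * m + 1) x = fst (chebyshev_TU (Suc (m + m)) x)"
    by (simp only: fst_chebyshev_TU mult_2 Suc_eq_plus1)
  also have "\<dots> = x * (t * t + (x^2 - 1) * u * u) + (x^2 - 1) * (t * u + u * t)"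
    using chebyshev_TU_add[OF assms assms] by simp
  also have "\<dots> = (x + 1) * (t + (x - 1) * u)^2 - (t^2 - (x^2 - 1) * u^2)"
    by (simp add: algebra_simps power2_eq_square)
  finally show ?thesis
    using chebyshev_TU_norm[of m x] assms by simp
qed

lemma QuadRes_mult_square_iff:
  fixes p x w :: int
  assumes "coprime w p"
  shows "QuadRes p (x * w^2) \<longleftrightarrow> QuadRes p x"
proof
  obtain v where v: "[w * v = 1] (mod p)"
    using assms cong_solve_coprime_int by blast
  assume "QuadRes p (x * w^2)"
  then obtain y where "[y^2 = x * w^2] (mod p)"
    unfolding QuadRes_def by blast
  then have "[y^2 * v^2 = x * w^2 * v^2] (mod p)"
    by (rule cong_mult) (rule cong_refl)
  then have "[(y * v)^2 = x * (w * v)^2] (mod p)"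
    by (simp add: power_mult_distrib mult.assoc)
  also have "[x * (w * v)^2 = x] (mod p)"
    using cong_mult[OF cong_refl[of x] cong_pow[OF v, of 2]] by simp
  finally show "QuadRes p x"
    unfolding QuadRes_def by blast
next
  assume "QuadRes p x"
  then obtain y where "[y^2 = x] (mod p)"
    unfolding QuadRes_def by blast
  then have "[y^2 * w^2 = x * w^2] (mod p)"
    by (rule cong_mult) (rule cong_refl)
  then have "[(y * w)^2 = x * w^2] (mod p)"
    by (simp add: power_mult_distrib)
  then show "QuadRes p (x * w^2)"
    unfolding QuadRes_def by blast
qed

lemma Legendre_mult_square:
  fixes p x w :: int
  assumes "coprime w p"
  shows "Legendre (x * w^2) p = Legendre x p"
proof -
  have "[x * w^2 = 0] (mod p) \<longleftrightarrow> [x = 0] (mod p)"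
    using assms by (simp add: cong_0_iff coprime_dvd_mult_left_iff coprime_commute)
  then show ?thesis
    using QuadRes_mult_square_iff[OF assms] by (simp add: Legendre_def)
qed

lemma Legendre_square:
  fixes p w :: int
  assumes "prime p" and "coprime w p"
  shows "Legendre (w^2) p = 1"
proof -
  have "\<not> [1 = 0] (mod p)"
    using assms(1) not_prime_unit by (auto simp: cong_0_iff)
  moreover have "QuadRes p 1"
    unfolding QuadRes_def by (rule exI[of _ 1]) simp
  ultimately have "Legendre 1 p = 1"
    by (simp add: Legendre_def)
  then show ?thesis
    using Legendre_mult_square[OF assms(2), of 1] by simp
qed

lemma coprime_if_not_dvd_mult_square:
  fixes p x w :: int
  assumes "prime p" and "\<not> p dvd x * w^2"
  shows "coprime w p"
proof -
  have "\<not> p dvd w"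
    using assms(2) by (auto simp: power2_eq_square)
  then show ?thesis
    using prime_imp_coprime[OF assms(1)] coprime_commute by blast
qed

lemma eps_sym_chebyshev_T:
  fixes p a :: int
  assumes "prime p"
    and "\<not> [chebyshev_T n a = 1] (mod p)" and "\<not> [chebyshev_T n a = -1] (mod p)"
  shows "eps_sym p (chebyshev_T n a) = eps_sym p a"
proof -
  define T where "T = chebyshev_T n a"
  define U where "U = snd (chebyshev_TU n a)"
  have "T^2 - 1 = (a^2 - 1) * U^2"
    using chebyshev_T_sq_minus_one[of n a] by (simp add: T_def U_def)
  moreover have "\<not> p dvd (T - 1) * (T + 1)"
    using assms by (simp add: T_def cong_iff_dvd_diff prime_dvd_mult_iff)
  moreover have "(T - 1) * (T + 1) = T^2 - 1"
    by (simp add: algebra_simps power2_eq_square)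
  ultimately have "coprime U p"
    using coprime_if_not_dvd_mult_square[OF assms(1)] by metis
  then show ?thesis
    using Legendre_mult_square \<open>T^2 - 1 = _\<close> by (simp add: eps_sym_def T_def)
qed

lemma not_dvd_double_plus_one:
  fixes p T :: int
  assumes "prime p" and "odd p" and "\<not> [T = -1] (mod p)"
  shows "\<not> p dvd 2 * (T + 1)"
proof -
  have "\<not> p dvd 2"
    using assms(1,2) primes_dvd_imp_eq[of p 2] by auto
  moreover have "\<not> p dvd T + 1"
    using assms(3) by (simp add: cong_iff_dvd_diff)
  ultimately show ?thesis
    using prime_dvd_mult_iff[OF assms(1)] by blast
qed

lemma delta_sym_chebyshev_T_even:
  fixes p a :: int
  assumes "prime p" and "odd p" and "\<not> [chebyshev_T (2 * m) a = -1] (mod p)"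
  shows "delta_sym p (chebyshev_T (2 * m) a) = 1"
proof -
  define w where "w = 2 * chebyshev_T m a"
  have eq: "2 * (chebyshev_T (2 * m) a + 1) = 1 * w^2"
    by (simp add: w_def chebyshev_T_double power2_eq_square)
  have "\<not> p dvd 2 * (chebyshev_T (2 * m) a + 1)"
    using not_dvd_double_plus_one assms by blast
  then have "coprime w p"
    using coprime_if_not_dvd_mult_square[OF assms(1)] eq by metis
  then show ?thesis
    using Legendre_square[OF assms(1)] eq by (simp add: delta_sym_def)
qed

lemma delta_sym_chebyshev_T_odd:
  fixes p a :: int
  assumes "prime p" and "odd p" and "\<not> [chebyshev_T (2 * m + 1) a = -1] (mod p)"
  shows "delta_sym p (chebyshev_T (2 * m + 1) a) = delta_sym p a"
proof -
  obtain t u where tu: "chebyshev_TU m a = (t, u)" by fastforce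
  define w where "w = t + (a - 1) * u"
  have eq: "2 * (chebyshev_T (2 * m + 1) a + 1) = 2 * (a + 1) * w^2"
    using chebyshev_T_odd_plus_one[OF tu] by (simp add: w_def)
  have "\<not> p dvd 2 * (chebyshev_T (2 * m + 1) a + 1)"
    using not_dvd_double_plus_one assms by blast
  then have "coprime w p"
    using coprime_if_not_dvd_mult_square[OF assms(1)] eq by metis
  then show ?thesis
    using Legendre_mult_square eq by (simp add: delta_sym_def)
qed

theorem lemma3p3:
  fixes p a :: int and n :: nat
  assumes "prime p" and "odd p"
    and "\<not> [a = 0] (mod p)" and "\<not> [a = 1] (mod p)" and "\<not> [a = -1] (mod p)"
    and "n \<ge> 1"
    and "\<not> [chebyshev_T n a = 1] (mod p)" and "\<not> [chebyshev_T n a = -1] (mod p)"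
  shows "eps_sym p (chebyshev_T n a) = eps_sym p a
    \<and> (even n \<longrightarrow> delta_sym p (chebyshev_T n a) = 1)
    \<and> (odd n \<longrightarrow> delta_sym p (chebyshev_T n a) = delta_sym p a)"
proof (intro conjI impI)
  show "eps_sym p (chebyshev_T n a) = eps_sym p a"
    using eps_sym_chebyshev_T assms(1,7,8) .
next
  assume "even n"
  then obtain m where "n = 2 * m" by blast
  then show "delta_sym p (chebyshev_T n a) = 1"
    using delta_sym_chebyshev_T_even assms(1,2,8) by blast
next
  assume "odd n"
  then obtain m where "n = 2 * m + 1" by (blast elim: oddE)
  then show "delta_sym p (chebyshev_T n a) = delta_sym p a"
    using delta_sym_chebyshev_T_odd assms(1,2,8) by blast
qed

end
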